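(* Let $n,d$ be integers with $3\le d\le n-2$. Define for $x\ge d$ $$\phi(x)=\frac{2^{-(n-d+1)}\,n!}{(d-3)!\,(n-d+1)!}\int_0^d z^{d-3}(d-z)(x-z)^{n-d+1}\,dz,\qquad \Phi(x)=\frac{2^{-(n-d+1)}\,n!}{(d-3)!\,(n-d+2)!}\int_0^d z^{d-3}(d-z)(x-z)^{n-d+2}\,dz.$$ Then $\Phi(2n-d+2)>2\phi(2n-d+2)$.
   Context: Here $\Phi(x)=\int_0^x\phi(t)\,dt$ where $\phi$ on $[0,d]$ is $2^{-(n-d+1)}x^{n-1}(dn-(d-2)x)$; the displayed formulas are the values for $x\ge d$, and $2n-d+2>d$. *)

theory Defs
  imports "HOL-Analysis.Analysis"
begin

definition phi_fn :: "nat \<Rightarrow> nat \<Rightarrow> real \<Rightarrow> real" where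
  "phi_fn n d x =
     (2 powr (- real (n - d + 1)) * fact n / (fact (d - 3) * fact (n - d + 1))) *
     integral {0..real d} (\<lambda>z. z ^ (d - 3) * (real d - z) * (x - z) ^ (n - d + 1))"

definition Phi_fn :: "nat \<Rightarrow> nat \<Rightarrow> real \<Rightarrow> real" where
  "Phi_fn n d x =
     (2 powr (- real (n - d + 1)) * fact n / (fact (d - 3) * fact (n - d + 2))) *
     integral {0..real d} (\<lambda>z. z ^ (d - 3) * (real d - z) * (x - z) ^ (n - d + 2))"

end

theory Submission
  imports Defs
begin

text \<open>With \<open>m = n - d + 1\<close>, \<open>x = 2n - d + 2\<close> and \<open>w(z) = z^(d-3) (d - z)\<close>, the
  difference \<open>\<Phi>(x) - 2 \<phi>(x)\<close> is a positive multiple of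
  \<open>\<integral>\<^sub>0\<^sup>d w(z) (x - 2(m + 1) - z) (x - z)^m dz\<close>, and \<open>x - 2(m + 1) = d - 2\<close>.
  The signed weight \<open>w(z) (d - 2 - z)\<close> has total integral zero (an antiderivative is
  \<open>z^(d-2) (d - z)^2 / d\<close>) and changes sign at \<open>d - 2\<close>, while \<open>(x - z)^m\<close> is strictly
  decreasing on \<open>[0, d]\<close>. So replacing \<open>(x - z)^m\<close> by \<open>(x - z)^m - (x - d + 2)^m\<close> leaves
  the integral unchanged and makes the integrand nonnegative and not identically zero.\<close>

lemma has_integral_power_weight_balance:
  fixes d :: nat
  assumes "3 \<le> d"
  shows "((\<lambda>z. z ^ (d - 3) * (real d - z) * (real d - 2 - z)) has_integral 0) {0..real d}"
proof -
  obtain k where d: "d = k + 3"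
    using assms le_Suc_ex by (metis add.commute)
  define Q where "Q z = z ^ (k + 1) * (real d - z)\<^sup>2" for z :: real
  have "(Q has_vector_derivative real d * (z ^ (d - 3) * (real d - z) * (real d - 2 - z)))
          (at z within {0..real d})" for z
    unfolding Q_def d has_real_derivative_iff_has_vector_derivative [symmetric]
    by (rule derivative_eq_intros refl | simp)+ (simp add: algebra_simps power2_eq_square)
  then have "((\<lambda>z. real d * (z ^ (d - 3) * (real d - z) * (real d - 2 - z)))
               has_integral Q (real d) - Q 0) {0..real d}"
    by (intro fundamental_theorem_of_calculus) auto
  then have "((\<lambda>z. real d *\<^sub>R (z ^ (d - 3) * (real d - z) * (real d - 2 - z)))
               has_integral real d *\<^sub>R 0) {0..real d}"
    by (simp add: Q_def)
  then show ?thesis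
    using assms by (subst (asm) has_integral_cmul_iff) auto
qed

lemma integral_balanced_weight_antimono_pos:
  fixes w g :: "real \<Rightarrow> real"
  assumes "a < b" and "c \<in> {a..b}"
    and cont_w: "continuous_on {a..b} w" and cont_g: "continuous_on {a..b} g"
    and w_nonneg: "\<And>z. z \<in> {a..b} \<Longrightarrow> 0 \<le> w z"
    and g_antimono: "\<And>y z. a \<le> y \<Longrightarrow> y \<le> z \<Longrightarrow> z \<le> b \<Longrightarrow> g z \<le> g y"
    and balance: "integral {a..b} (\<lambda>z. w z * (c - z)) = 0"
    and t: "t \<in> {a..b}" "w t * (c - t) * (g t - g c) \<noteq> 0"
  shows "integral {a..b} (\<lambda>z. w z * (c - z) * g z) > 0"
proof -
  define H where "H z = w z * (c - z) * (g z - g c)" for z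
  have cont_H: "continuous_on {a..b} H"
    unfolding H_def by (intro continuous_intros cont_w cont_g)
  have H_nonneg: "0 \<le> H z" if "z \<in> {a..b}" for z
  proof -
    have "0 \<le> (c - z) * (g z - g c)"
      using that \<open>c \<in> {a..b}\<close> g_antimono [of z c] g_antimono [of c z]
      by (cases "z \<le> c") (auto intro: mult_nonpos_nonpos)
    then show ?thesis
      unfolding H_def using w_nonneg [OF that] by (simp add: mult.assoc)
  qed
  have "integral {a..b} H \<noteq> 0"
    using integral_eq_0_iff [OF cont_H \<open>a < b\<close>] H_nonneg t unfolding H_def by auto
  moreover have "0 \<le> integral {a..b} H"
    using H_nonneg integrable_continuous_interval [OF cont_H] by (intro integral_nonneg) auto
  moreover have "integral {a..b} H
      = integral {a..b} (\<lambda>z. w z * (c - z) * g z) - g c * integral {a..b} (\<lambda>z. w z * (c - z))"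
  proof -
    have "integral {a..b} H
        = integral {a..b} (\<lambda>z. w z * (c - z) * g z - g c * (w z * (c - z)))"
      unfolding H_def by (simp add: algebra_simps)
    also have "\<dots> = integral {a..b} (\<lambda>z. w z * (c - z) * g z)
                      - integral {a..b} (\<lambda>z. g c * (w z * (c - z)))"
      by (intro integral_diff integrable_continuous_interval continuous_intros cont_w cont_g)
    finally show ?thesis
      by simp
  qed
  ultimately show ?thesis
    using balance by simp
qed

lemma Phi_fn_minus_twice_phi_fn:
  fixes n d :: nat and x :: real
  shows "Phi_fn n d x - 2 * phi_fn n d x =
    2 powr (- real (n - d + 1)) * fact n / (fact (d - 3) * fact (n - d + 2)) *
    integral {0..real d}
      (\<lambda>z. z ^ (d - 3) * (real d - z) * (x - 2 * real (n - d + 2) - z) * (x - z) ^ (n - d + 1))"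
proof -
  define m where "m = n - d + 1"
  define C where "C = 2 powr (- real m) * fact n / fact (d - 3)"
  define w where "w z = z ^ (d - 3) * (real d - z)" for z :: real
  have fact_m: "C / fact m * B = C / fact (m + 1) * (real (m + 1) * B)" for B
    by (simp del: of_nat_add)
  have "Phi_fn n d x - 2 * phi_fn n d x =
      C / fact (m + 1) * (integral {0..real d} (\<lambda>z. w z * (x - z) ^ (m + 1))
        - 2 * real (m + 1) * integral {0..real d} (\<lambda>z. w z * (x - z) ^ m))"
  proof -
    have "Phi_fn n d x = C / fact (m + 1) * integral {0..real d} (\<lambda>z. w z * (x - z) ^ (m + 1))"
      unfolding Phi_fn_def C_def w_def m_def by (simp add: Suc_diff_le mult.assoc)
    moreover have "phi_fn n d x = C / fact m * integral {0..real d} (\<lambda>z. w z * (x - z) ^ m)"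
      unfolding phi_fn_def C_def w_def m_def by (simp add: mult.assoc)
    ultimately show ?thesis
      unfolding fact_m by (simp only: right_diff_distrib mult.assoc mult.left_commute [of 2])
  qed
  also have "integral {0..real d} (\<lambda>z. w z * (x - z) ^ (m + 1))
        - 2 * real (m + 1) * integral {0..real d} (\<lambda>z. w z * (x - z) ^ m)
      = integral {0..real d} (\<lambda>z. w z * (x - z) ^ (m + 1) - 2 * real (m + 1) * (w z * (x - z) ^ m))"
    unfolding w_def
    by (subst integral_diff) (auto intro!: integrable_continuous_interval continuous_intros)
  also have "\<dots> = integral {0..real d} (\<lambda>z. w z * (x - 2 * real (m + 1) - z) * (x - z) ^ m)"
    by (rule integral_cong) (simp add: algebra_simps)
  finally show ?thesis
    unfolding C_def w_def m_def by (simp add: Suc_diff_le mult.assoc)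
qed

theorem lemma4p12:
  fixes n d :: nat
  assumes "3 \<le> d" and "d + 2 \<le> n"
  shows "Phi_fn n d (real (2 * n - d + 2)) > 2 * phi_fn n d (real (2 * n - d + 2))"
proof -
  define x where "x = real (2 * n - d + 2)"
  define m where "m = n - d + 1"
  have x_shift: "x - 2 * real (n - d + 2) = real d - 2"
    unfolding x_def using assms by (simp add: of_nat_diff)
  have "x - real d > 0"
    unfolding x_def using assms by (simp add: of_nat_diff)
  have "integral {0..real d} (\<lambda>z. z ^ (d - 3) * (real d - z) * (real d - 2 - z) * (x - z) ^ m) > 0"
  proof (rule integral_balanced_weight_antimono_pos)
    show "integral {0..real d} (\<lambda>z. z ^ (d - 3) * (real d - z) * (real d - 2 - z)) = 0"
      using has_integral_power_weight_balance [OF assms(1)] by (rule integral_unique)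
    show "\<And>y z. 0 \<le> y \<Longrightarrow> y \<le> z \<Longrightarrow> z \<le> real d \<Longrightarrow> (x - z) ^ m \<le> (x - y) ^ m"
      using \<open>x - real d > 0\<close> by (intro power_mono) auto
    have "(x - (real d - 1)) ^ m < (x - (real d - 2)) ^ m"
      using \<open>x - real d > 0\<close> assms unfolding m_def by (intro power_strict_mono) auto
    then show "(real d - 1) ^ (d - 3) * (real d - (real d - 1)) * (real d - 2 - (real d - 1)) *
        ((x - (real d - 1)) ^ m - (x - (real d - 2)) ^ m) \<noteq> 0"
      using assms by simp
  qed (use assms in \<open>auto intro!: continuous_intros\<close>)
  then have "Phi_fn n d x - 2 * phi_fn n d x > 0"
    unfolding Phi_fn_minus_twice_phi_fn x_shift m_def by simp
  then show ?thesis
    unfolding x_def by simp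
qed

end
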